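(* Let $X$ be a compact ultrametric space with a finite similarity structure $\mathrm{Sim}_X$ satisfying $|\mathrm{Sim}_X(B_1,B_2)|\le1$ for all balls $B_1,B_2\subseteq X$. Then there is a linear order $\le$ on $X$ such that every $\gamma\in\mathrm{Sim}_X(B_1,B_2)$ is order-preserving, for all balls $B_1,B_2$.
   Context: Balls in $X$ are closed metric balls of positive radius. A *finite similarity structure* $\mathrm{Sim}_X$ assigns to each ordered pair of balls $B_1,B_2$ a finite (possibly empty) set $\mathrm{Sim}_X(B_1,B_2)$ of surjective similarities $B_1\to B_2$ (maps scaling all distances by a fixed positive constant), such that $\mathrm{id}_{B_1}\in\mathrm{Sim}_X(B_1,B_1)$, the sets are closed under inverses and compositions, and if $h\in\mathrm{Sim}_X(B_1,B_2)$ and $B_3\subseteq B_1$ is a ball then $h|_{B_3}\in\mathrm{Sim}_X(B_3,h(B_3))$. *)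

theory Defs
  imports "HOL-Analysis.Analysis" "HOL-Library.FuncSet"
begin

text \<open>The ambient compact ultrametric space X is the whole type 'a.\<close>

definition ultrametric_space :: "'a::metric_space itself \<Rightarrow> bool" where
  "ultrametric_space _ \<longleftrightarrow> (\<forall>x y z::'a. dist x z \<le> max (dist x y) (dist y z))"

definition is_ball :: "'a::metric_space set \<Rightarrow> bool" where
  "is_ball B \<longleftrightarrow> (\<exists>x r. r > 0 \<and> B = cball x r)"

definition similarity :: "'a::metric_space set \<Rightarrow> 'a set \<Rightarrow> ('a \<Rightarrow> 'a) \<Rightarrow> bool" where
  "similarity B1 B2 h \<longleftrightarrow> h \<in> extensional B1 \<and> h ` B1 = B2 \<and>
     (\<exists>c>0. \<forall>x\<in>B1. \<forall>y\<in>B1. dist (h x) (h y) = c * dist x y)"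

definition finite_similarity_structure ::
    "('a::metric_space set \<Rightarrow> 'a set \<Rightarrow> ('a \<Rightarrow> 'a) set) \<Rightarrow> bool" where
  "finite_similarity_structure Sim \<longleftrightarrow>
     (\<forall>B1 B2. is_ball B1 \<and> is_ball B2 \<longrightarrow>
        finite (Sim B1 B2) \<and> (\<forall>h\<in>Sim B1 B2. similarity B1 B2 h)) \<and>
     (\<forall>B1. is_ball B1 \<longrightarrow> restrict id B1 \<in> Sim B1 B1) \<and>
     (\<forall>B1 B2 h. is_ball B1 \<and> is_ball B2 \<and> h \<in> Sim B1 B2 \<longrightarrow>
        restrict (inv_into B1 h) B2 \<in> Sim B2 B1) \<and>
     (\<forall>B1 B2 B3 h g. is_ball B1 \<and> is_ball B2 \<and> is_ball B3 \<and>
        h \<in> Sim B1 B2 \<and> g \<in> Sim B2 B3 \<longrightarrow> compose B1 g h \<in> Sim B1 B3) \<and>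
     (\<forall>B1 B2 B3 h. is_ball B1 \<and> is_ball B2 \<and> is_ball B3 \<and> B3 \<subseteq> B1 \<and>
        h \<in> Sim B1 B2 \<longrightarrow> restrict h B3 \<in> Sim B3 (h ` B3))"

end

theory Submission
  imports Defs
begin

text \<open>
  Two distinct points x, y span the closed ball D = cball x (dist x y); in an
  ultrametric space D is partitioned into open balls of radius dist x y (its branches), and
  x, y lie on different branches.  Pick in every similarity class of balls a canonical ball;
  by the uniqueness hypothesis each ball D has exactly one similarity of the structure onto
  its canonical ball, its normalization.  Transporting branches by normalizations makes the
  branches of similar balls comparable, so a single arbitrary linear order L on sets of
  points (e.g. a well-ordering) induces an order: x precedes y iff the transported branch of
  x precedes that of y in L.  Linearity follows from the ultrametric inequality; every
  similarity of the structure preserves the order because, by uniqueness, it commutes with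
  normalizations and maps spanned balls and branches onto spanned balls and branches.
\<close>

section \<open>Ultrametric balls\<close>

lemma ultrametric_ineq:
  fixes x y z :: "'a::metric_space"
  assumes "ultrametric_space TYPE('a)"
  shows "dist x z \<le> max (dist x y) (dist y z)"
  using assms unfolding ultrametric_space_def by blast

lemma cball_recenter:
  fixes x y :: "'a::metric_space"
  assumes ultra: "ultrametric_space TYPE('a)" and "y \<in> cball x r"
  shows "cball y r = cball x r"
proof -
  have "cball u r \<subseteq> cball v r" if "dist v u \<le> r" for u v :: 'a
  proof
    fix w assume "w \<in> cball u r"
    then show "w \<in> cball v r"
      using that ultrametric_ineq[OF ultra, of v w u] by (simp add: dist_commute)
  qed
  then show ?thesis using assms(2) by (fastforce simp: dist_commute)
qed

lemma ball_subset_cball_ultra: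
  fixes x u :: "'a::metric_space"
  assumes "ultrametric_space TYPE('a)" and "u \<in> cball x r"
  shows "ball u r \<subseteq> cball x r"
  using cball_recenter[OF assms] ball_subset_cball by blast

lemma spanned_cball_subset:
  fixes x y :: "'a::metric_space"
  assumes ultra: "ultrametric_space TYPE('a)" and "is_ball B" "x \<in> B" "y \<in> B"
  shows "cball x (dist x y) \<subseteq> B"
proof -
  obtain z s where B: "B = cball z s" using \<open>is_ball B\<close> unfolding is_ball_def by blast
  have "dist x y \<le> s"
    using ultrametric_ineq[OF ultra, of x y z] assms(3,4) B by (auto simp: dist_commute)
  then have "cball x (dist x y) \<subseteq> cball x s" by (rule subset_cball)
  also have "\<dots> = B" using cball_recenter[OF ultra] assms(3) B by blast
  finally show ?thesis .
qed

lemma ball_eq_iff_ultra: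
  fixes u v :: "'a::metric_space"
  assumes ultra: "ultrametric_space TYPE('a)" and "r > 0"
  shows "ball u r = ball v r \<longleftrightarrow> dist u v < r"
proof
  assume "ball u r = ball v r"
  then show "dist u v < r" using \<open>r > 0\<close> by (metis centre_in_ball dist_commute mem_ball)
next
  assume uv: "dist u v < r"
  have "dist u w < r \<longleftrightarrow> dist v w < r" for w
    using uv ultrametric_ineq[OF ultra, of u w v] ultrametric_ineq[OF ultra, of v w u]
    by (auto simp: dist_commute)
  then show "ball u r = ball v r" by auto
qed

section \<open>Similarities\<close>

lemma similarity_image_level_set:
  fixes g :: "'a::metric_space \<Rightarrow> 'a"
  assumes "c > 0" "g ` B1 = B2" "\<forall>a\<in>B1. \<forall>b\<in>B1. dist (g a) (g b) = c * dist a b" "x \<in> B1"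
  shows "g ` {v \<in> B1. P (dist x v)} = {w \<in> B2. P (dist (g x) w / c)}"
  using assms by force

lemma similarity_image_cball:
  fixes g :: "'a::metric_space \<Rightarrow> 'a"
  assumes "c > 0" "g ` B1 = B2" "\<forall>a\<in>B1. \<forall>b\<in>B1. dist (g a) (g b) = c * dist a b" "x \<in> B1"
    and "cball x r \<subseteq> B1" "cball (g x) (c * r) \<subseteq> B2"
  shows "g ` cball x r = cball (g x) (c * r)"
proof -
  have "g ` {v \<in> B1. dist x v \<le> r} = {w \<in> B2. dist (g x) w / c \<le> r}"
    by (rule similarity_image_level_set[OF assms(1-4)])
  moreover have "{v \<in> B1. dist x v \<le> r} = cball x r" using assms(5) by auto
  moreover have "{w \<in> B2. dist (g x) w / c \<le> r} = cball (g x) (c * r)"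
    using assms(1,6) by (auto simp: pos_divide_le_eq mult.commute)
  ultimately show ?thesis by simp
qed

lemma similarity_image_ball:
  fixes g :: "'a::metric_space \<Rightarrow> 'a"
  assumes "c > 0" "g ` B1 = B2" "\<forall>a\<in>B1. \<forall>b\<in>B1. dist (g a) (g b) = c * dist a b" "x \<in> B1"
    and "ball x r \<subseteq> B1" "ball (g x) (c * r) \<subseteq> B2"
  shows "g ` ball x r = ball (g x) (c * r)"
proof -
  have "g ` {v \<in> B1. dist x v < r} = {w \<in> B2. dist (g x) w / c < r}"
    by (rule similarity_image_level_set[OF assms(1-4)])
  moreover have "{v \<in> B1. dist x v < r} = ball x r" using assms(5) by auto
  moreover have "{w \<in> B2. dist (g x) w / c < r} = ball (g x) (c * r)"
    using assms(1,6) by (auto simp: pos_divide_less_eq mult.commute)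
  ultimately show ?thesis by simp
qed

lemma similarity_image_spanned:
  fixes \<gamma> :: "'a::metric_space \<Rightarrow> 'a"
  assumes ultra: "ultrametric_space TYPE('a)" and "is_ball B1" "is_ball B2"
    and c: "c > 0" "\<gamma> ` B1 = B2" "\<forall>a\<in>B1. \<forall>b\<in>B1. dist (\<gamma> a) (\<gamma> b) = c * dist a b"
    and "x \<in> B1" "y \<in> B1"
  shows "\<gamma> ` cball x (dist x y) = cball (\<gamma> x) (dist (\<gamma> x) (\<gamma> y))"
    and "u \<in> cball x (dist x y) \<Longrightarrow> \<gamma> ` ball u (dist x y) = ball (\<gamma> u) (dist (\<gamma> x) (\<gamma> y))"
proof -
  have dist_img: "dist (\<gamma> x) (\<gamma> y) = c * dist x y" using c(3) assms(7,8) by blast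
  have DB1: "cball x (dist x y) \<subseteq> B1" using spanned_cball_subset[OF ultra assms(2,7,8)] .
  have DB2: "cball (\<gamma> x) (c * dist x y) \<subseteq> B2"
    using spanned_cball_subset[OF ultra assms(3), of "\<gamma> x" "\<gamma> y"] c(2) assms(7,8) dist_img by auto
  show image_D: "\<gamma> ` cball x (dist x y) = cball (\<gamma> x) (dist (\<gamma> x) (\<gamma> y))"
    using similarity_image_cball[OF c assms(7) DB1 DB2] dist_img by simp
  assume u: "u \<in> cball x (dist x y)"
  then have "\<gamma> u \<in> cball (\<gamma> x) (c * dist x y)" using image_D dist_img by (metis imageI)
  then have "ball (\<gamma> u) (c * dist x y) \<subseteq> B2" using ball_subset_cball_ultra[OF ultra] DB2 by blast
  moreover have "ball u (dist x y) \<subseteq> B1" using ball_subset_cball_ultra[OF ultra u] DB1 by blast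
  moreover have "u \<in> B1" using u DB1 by blast
  ultimately show "\<gamma> ` ball u (dist x y) = ball (\<gamma> u) (dist (\<gamma> x) (\<gamma> y))"
    using similarity_image_ball[OF c] dist_img by simp
qed

lemma similarity_inj_on:
  assumes "similarity B1 B2 g"
  shows "inj_on g B1"
proof (rule inj_onI)
  fix a b assume "a \<in> B1" "b \<in> B1" "g a = g b"
  then show "a = b" using assms unfolding similarity_def by force
qed

section \<open>Similarity structures with at most one similarity between two balls\<close>

locale unique_similarity_structure =
  fixes Sim :: "'a::metric_space set \<Rightarrow> 'a set \<Rightarrow> ('a \<Rightarrow> 'a) set"
  assumes sim_structure: "finite_similarity_structure Sim"
    and at_most_one: "\<And>B1 B2. is_ball B1 \<Longrightarrow> is_ball B2 \<Longrightarrow> card (Sim B1 B2) \<le> 1"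
begin

lemma sim_axioms:
  shows sim_finite: "is_ball B1 \<Longrightarrow> is_ball B2 \<Longrightarrow> finite (Sim B1 B2)"
    and sim_similarity: "is_ball B1 \<Longrightarrow> is_ball B2 \<Longrightarrow> h \<in> Sim B1 B2 \<Longrightarrow> similarity B1 B2 h"
    and sim_id: "is_ball B \<Longrightarrow> restrict id B \<in> Sim B B"
    and sim_inv: "is_ball B1 \<Longrightarrow> is_ball B2 \<Longrightarrow> h \<in> Sim B1 B2
      \<Longrightarrow> restrict (inv_into B1 h) B2 \<in> Sim B2 B1"
    and sim_compose: "is_ball B1 \<Longrightarrow> is_ball B2 \<Longrightarrow> is_ball B3 \<Longrightarrow> h \<in> Sim B1 B2
      \<Longrightarrow> g \<in> Sim B2 B3 \<Longrightarrow> compose B1 g h \<in> Sim B1 B3"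
    and sim_restrict: "is_ball B1 \<Longrightarrow> is_ball B2 \<Longrightarrow> is_ball B3 \<Longrightarrow> B3 \<subseteq> B1
      \<Longrightarrow> h \<in> Sim B1 B2 \<Longrightarrow> restrict h B3 \<in> Sim B3 (h ` B3)"
  using sim_structure unfolding finite_similarity_structure_def by simp_all

lemma sim_unique:
  assumes "is_ball B1" "is_ball B2" "h \<in> Sim B1 B2" "g \<in> Sim B1 B2"
  shows "h = g"
proof -
  have "finite (Sim B1 B2)" using sim_finite assms(1,2) .
  then show ?thesis using at_most_one[OF assms(1,2)] assms(3,4) by (auto simp: card_le_Suc0_iff_eq)
qed

end

text \<open>Choosing one canonical ball in each similarity class of balls, every ball D is
  carried to its canonical ball by a unique similarity, its normalization.\<close>
definition canonical_ball :: "('a::metric_space set \<Rightarrow> 'a set \<Rightarrow> ('a \<Rightarrow> 'a) set) \<Rightarrow> 'a set \<Rightarrow> 'a set"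
  where "canonical_ball Sim D = (SOME B. is_ball B \<and> Sim B D \<noteq> {})"

definition normalization :: "('a::metric_space set \<Rightarrow> 'a set \<Rightarrow> ('a \<Rightarrow> 'a) set) \<Rightarrow> 'a set \<Rightarrow> 'a \<Rightarrow> 'a"
  where "normalization Sim D = the_elem (Sim D (canonical_ball Sim D))"

context unique_similarity_structure
begin

text \<open>Every ball is similar to its canonical ball (it is similar to itself, so the choice succeeds).\<close>
lemma canonical_ball:
  assumes "is_ball D"
  shows "is_ball (canonical_ball Sim D)" "Sim (canonical_ball Sim D) D \<noteq> {}"
proof -
  have "is_ball D \<and> Sim D D \<noteq> {}" using assms sim_id by blast
  then have "is_ball (canonical_ball Sim D) \<and> Sim (canonical_ball Sim D) D \<noteq> {}"
    unfolding canonical_ball_def by (rule someI)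
  then show "is_ball (canonical_ball Sim D)" "Sim (canonical_ball Sim D) D \<noteq> {}" by auto
qed

lemma normalization_in:
  assumes "is_ball D"
  shows "normalization Sim D \<in> Sim D (canonical_ball Sim D)"
proof -
  obtain h where "h \<in> Sim (canonical_ball Sim D) D" using canonical_ball[OF assms] by blast
  then obtain g where g: "g \<in> Sim D (canonical_ball Sim D)"
    using sim_inv canonical_ball(1) assms by blast
  then have "Sim D (canonical_ball Sim D) = {g}"
    using sim_unique assms canonical_ball(1)[OF assms] by blast
  then show ?thesis unfolding normalization_def by simp
qed

lemma canonical_ball_cong:
  assumes "is_ball D" "is_ball D'" "g \<in> Sim D D'"
  shows "canonical_ball Sim D' = canonical_ball Sim D"
proof -
  have "restrict (inv_into D g) D' \<in> Sim D' D" using sim_inv assms by blast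
  then have "(is_ball B \<and> Sim B D' \<noteq> {}) = (is_ball B \<and> Sim B D \<noteq> {})" for B
    using sim_compose assms by blast
  then show ?thesis unfolding canonical_ball_def by simp
qed

text \<open>By uniqueness, normalizations commute with the similarities of the structure.\<close>
lemma normalization_compose:
  assumes "is_ball D" "is_ball D'" "g \<in> Sim D D'" "v \<in> D"
  shows "normalization Sim D' (g v) = normalization Sim D v"
proof -
  let ?C = "canonical_ball Sim D"
  have C: "is_ball ?C" using canonical_ball(1)[OF assms(1)] .
  have "normalization Sim D' \<in> Sim D' ?C"
    using normalization_in[OF assms(2)] canonical_ball_cong[OF assms(1-3)] by simp
  then have "compose D (normalization Sim D') g \<in> Sim D ?C"
    using sim_compose[OF assms(1,2) C assms(3)] by blast
  then have "compose D (normalization Sim D') g = normalization Sim D"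
    using sim_unique[OF assms(1) C _ normalization_in[OF assms(1)]] by blast
  then show ?thesis using assms(4) by (metis compose_eq)
qed

lemma normalization_inj_on: "is_ball D \<Longrightarrow> inj_on (normalization Sim D) D"
  using similarity_inj_on sim_similarity normalization_in canonical_ball(1) by blast

end

section \<open>The branch order\<close>

text \<open>The ball spanned by distinct points x, y (radius dist x y) is partitioned into the open
  balls of the same radius, its branches; points x and y lie on different branches.
  branch x y u is the branch through u, transported into the canonical ball, so that
  branches of similar balls become directly comparable.\<close>
definition branch :: "('a::metric_space set \<Rightarrow> 'a set \<Rightarrow> ('a \<Rightarrow> 'a) set) \<Rightarrow> 'a \<Rightarrow> 'a \<Rightarrow> 'a \<Rightarrow> 'a set"
  where "branch Sim x y u = normalization Sim (cball x (dist x y)) ` ball u (dist x y)"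

definition branch_order ::
    "('a::metric_space set \<Rightarrow> 'a set \<Rightarrow> ('a \<Rightarrow> 'a) set) \<Rightarrow> 'a set rel \<Rightarrow> 'a rel"
  where "branch_order Sim L = {(x, y). (branch Sim x y x, branch Sim x y y) \<in> L}"

lemma spanned_cball_is_ball: "x \<noteq> y \<Longrightarrow> is_ball (cball x (dist x y))"
  unfolding is_ball_def by (intro exI[of _ x] exI[of _ "dist x y"]) auto

text \<open>The branches only depend on the spanned ball and its radius, which in an ultrametric
  space can be spanned from any of its points.\<close>
lemma branch_recenter:
  fixes x y x' y' :: "'a::metric_space"
  assumes ultra: "ultrametric_space TYPE('a)"
    and "x' \<in> cball x (dist x y)" "dist x' y' = dist x y"
  shows "branch Sim x' y' = branch Sim x y"
  using cball_recenter[OF ultra assms(2)] assms(3) unfolding branch_def by simp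

text \<open>x and y span the same ball, so the branches do not depend on their order.\<close>
lemma branch_swap:
  fixes x y :: "'a::metric_space"
  assumes "ultrametric_space TYPE('a)"
  shows "branch Sim y x = branch Sim x y"
  by (rule branch_recenter[OF assms]) (simp_all add: dist_commute)

locale ultrametric_unique_similarity_structure = unique_similarity_structure Sim
  for Sim :: "'a::metric_space set \<Rightarrow> 'a set \<Rightarrow> ('a \<Rightarrow> 'a) set" +
  assumes ultra: "ultrametric_space TYPE('a)"
begin

lemma branch_eq_iff:
  assumes "x \<noteq> y" "u \<in> cball x (dist x y)" "v \<in> cball x (dist x y)"
  shows "branch Sim x y u = branch Sim x y v \<longleftrightarrow> dist u v < dist x y"
proof -
  let ?D = "cball x (dist x y)"
  have "inj_on (normalization Sim ?D) ?D"
    using normalization_inj_on spanned_cball_is_ball[OF assms(1)] .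
  moreover have "ball u (dist x y) \<subseteq> ?D" "ball v (dist x y) \<subseteq> ?D"
    using ball_subset_cball_ultra[OF ultra] assms(2,3) by blast+
  ultimately have "branch Sim x y u = branch Sim x y v \<longleftrightarrow> ball u (dist x y) = ball v (dist x y)"
    unfolding branch_def by (rule inj_on_image_eq_iff)
  also have "\<dots> \<longleftrightarrow> dist u v < dist x y"
    using ball_eq_iff_ultra[OF ultra] assms(1) by simp
  finally show ?thesis .
qed

lemma branch_self_ne: "x \<noteq> y \<Longrightarrow> branch Sim x y x \<noteq> branch Sim x y y"
  using branch_eq_iff[of x y x y] by (simp add: dist_commute)

text \<open>The key invariance: a similarity of the structure maps the spanned ball onto the spanned
  ball of the images and branches onto branches, and it commutes with normalizations.\<close>
lemma branch_invariant:
  assumes "is_ball B1" "is_ball B2" "\<gamma> \<in> Sim B1 B2" "x \<in> B1" "y \<in> B1"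
    and u: "u \<in> cball x (dist x y)"
  shows "branch Sim (\<gamma> x) (\<gamma> y) (\<gamma> u) = branch Sim x y u"
proof (cases "x = y")
  case True
  then show ?thesis unfolding branch_def by simp
next
  case False
  obtain c where c: "c > 0" "\<gamma> ` B1 = B2" "\<forall>a\<in>B1. \<forall>b\<in>B1. dist (\<gamma> a) (\<gamma> b) = c * dist a b"
    using sim_similarity[OF assms(1-3)] unfolding similarity_def by blast
  define D where "D = cball x (dist x y)"
  define D' where "D' = cball (\<gamma> x) (dist (\<gamma> x) (\<gamma> y))"
  have "\<gamma> x \<noteq> \<gamma> y" using c(1,3) assms(4,5) False by force
  then have D_ball: "is_ball D" "is_ball D'"
    unfolding D_def D'_def using spanned_cball_is_ball False by auto
  have image_D: "\<gamma> ` D = D'"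
    unfolding D_def D'_def by (rule similarity_image_spanned(1)[OF ultra assms(1,2) c assms(4,5)])
  have "restrict \<gamma> D \<in> Sim D D'"
    using sim_restrict[OF assms(1,2) D_ball(1) _ assms(3)] image_D
      spanned_cball_subset[OF ultra assms(1,4,5)] unfolding D_def by simp
  moreover have "ball u (dist x y) \<subseteq> D"
    using ball_subset_cball_ultra[OF ultra u] unfolding D_def .
  ultimately have "normalization Sim D' (\<gamma> v) = normalization Sim D v" if "v \<in> ball u (dist x y)" for v
    using normalization_compose[OF D_ball, of "restrict \<gamma> D" v] that by auto
  then have "normalization Sim D' ` \<gamma> ` ball u (dist x y) = normalization Sim D ` ball u (dist x y)"
    unfolding image_image by (rule image_cong[OF refl])
  then show ?thesis
    unfolding branch_def D_def D'_def
    using similarity_image_spanned(2)[OF ultra assms(1,2) c assms(4,5) u] by simp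
qed

text \<open>Transitivity is a case analysis on the two distances involved: by the ultrametric
  inequality, the pair spanning the larger ball decides, and if both balls coincide the
  three branches are compared inside one ball.\<close>
lemma branch_order_trans:
  assumes L: "linear_order L"
    and xy: "(x, y) \<in> branch_order Sim L" and yz: "(y, z) \<in> branch_order Sim L"
  shows "(x, z) \<in> branch_order Sim L"
proof -
  have L_trans: "trans L" and L_antisym: "antisym L" and L_refl: "refl_on UNIV L"
    using L unfolding linear_order_on_def partial_order_on_def preorder_on_def by auto
  let ?\<beta> = "branch Sim"
  have Lxy: "(?\<beta> x y x, ?\<beta> x y y) \<in> L" and Lyz: "(?\<beta> y z y, ?\<beta> y z z) \<in> L"
    using xy yz unfolding branch_order_def by auto
  consider "x = y" | "y = z" | "x = z" | "x \<noteq> y" "y \<noteq> z" "x \<noteq> z" by blast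
  then show ?thesis
  proof cases
    case 3
    then show ?thesis using L_refl unfolding branch_order_def refl_on_def by auto
  next
    case distinct: 4
    define a where "a = dist x y"
    define b where "b = dist y z"
    have ineq: "dist x z \<le> max a b" "b \<le> max a (dist x z)" "a \<le> max (dist x z) b"
      using ultrametric_ineq[OF ultra, of x z y] ultrametric_ineq[OF ultra, of y z x]
        ultrametric_ineq[OF ultra, of x y z] unfolding a_def b_def by (simp_all add: dist_commute)
    consider "a < b" | "b < a" | "a = b" by linarith
    then show ?thesis
    proof cases
      case 1
      then have xz: "dist x z = b" using ineq by linarith
      have "?\<beta> x z = ?\<beta> y z"
        using branch_recenter[OF ultra, where x=y and y=z and x'=x and y'=z] 1 xz a_def b_def by (simp add: dist_commute)
      moreover have "?\<beta> y z x = ?\<beta> y z y"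
        using branch_eq_iff[OF distinct(2), of x y] 1 a_def b_def by (simp add: dist_commute)
      ultimately show ?thesis using Lyz unfolding branch_order_def by simp
    next
      case 2
      then have xz: "dist x z = a" using ineq by linarith
      have "?\<beta> x z = ?\<beta> x y"
        using branch_recenter[OF ultra, where x=x and y=y and x'=x and y'=z] xz a_def by simp
      moreover have "?\<beta> x y z = ?\<beta> x y y"
        using branch_eq_iff[OF distinct(1), of z y] 2 xz a_def b_def by (simp add: dist_commute)
      ultimately show ?thesis using Lxy unfolding branch_order_def by simp
    next
      case 3
      have yz_xy: "?\<beta> y z = ?\<beta> x y"
        using branch_recenter[OF ultra, where x=x and y=y and x'=y and y'=z] 3 a_def b_def by (simp add: dist_commute)
      have Lxz: "(?\<beta> x y x, ?\<beta> x y z) \<in> L"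
        using L_trans Lxy Lyz unfolding yz_xy by (rule transD)
      have xz: "dist x z = a"
      proof (rule ccontr)
        assume "dist x z \<noteq> a"
        then have "dist x z < a" using ineq 3 by linarith
        then have "?\<beta> x y x = ?\<beta> x y z"
          using branch_eq_iff[OF distinct(1), of x z] 3 a_def b_def by (simp add: dist_commute)
        then have "?\<beta> x y x = ?\<beta> x y y"
          using L_antisym Lxy Lyz unfolding yz_xy by (metis antisymD)
        then show False using branch_self_ne distinct(1) by blast
      qed
      have "?\<beta> x z = ?\<beta> x y"
        using branch_recenter[OF ultra, where x=x and y=y and x'=x and y'=z] xz a_def by simp
      then show ?thesis using Lxz unfolding branch_order_def by simp
    qed
  next
    case 1
    then show ?thesis using yz by simp
  next
    case 2
    then show ?thesis using xy by simp
  qed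
qed

lemma branch_order_linear:
  assumes L: "linear_order L"
  shows "linear_order (branch_order Sim L)"
proof -
  have L_refl: "refl_on UNIV L" and L_antisym: "antisym L" and L_total: "total_on UNIV L"
    using L unfolding linear_order_on_def partial_order_on_def preorder_on_def by auto
  have "refl_on UNIV (branch_order Sim L)"
    by (rule refl_onI) (simp add: branch_order_def refl_onD[OF L_refl])
  moreover have "trans (branch_order Sim L)"
    using branch_order_trans[OF L] by (rule transI)
  moreover have "antisym (branch_order Sim L)"
  proof (rule antisymI)
    fix x y assume "(x, y) \<in> branch_order Sim L" "(y, x) \<in> branch_order Sim L"
    then have "(branch Sim x y x, branch Sim x y y) \<in> L" "(branch Sim x y y, branch Sim x y x) \<in> L"
      unfolding branch_order_def by (simp_all add: branch_swap[OF ultra, where x=x and y=y])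
    then have "branch Sim x y x = branch Sim x y y" by (rule antisymD[OF L_antisym])
    then show "x = y" using branch_self_ne by blast
  qed
  moreover have "total_on UNIV (branch_order Sim L)"
  proof (rule total_onI)
    fix x y :: 'a assume "x \<noteq> y"
    then have "branch Sim x y x \<noteq> branch Sim x y y" by (rule branch_self_ne)
    then have "(branch Sim x y x, branch Sim x y y) \<in> L \<or> (branch Sim x y y, branch Sim x y x) \<in> L"
      using L_total unfolding total_on_def by blast
    then show "(x, y) \<in> branch_order Sim L \<or> (y, x) \<in> branch_order Sim L"
      unfolding branch_order_def by (simp add: branch_swap[OF ultra, where x=x and y=y])
  qed
  ultimately show ?thesis
    unfolding linear_order_on_def partial_order_on_def preorder_on_def by simp
qed

lemma branch_order_preserved:
  assumes "is_ball B1" "is_ball B2" "\<gamma> \<in> Sim B1 B2" "x \<in> B1" "y \<in> B1"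
    and "(x, y) \<in> branch_order Sim L"
  shows "(\<gamma> x, \<gamma> y) \<in> branch_order Sim L"
proof -
  have "branch Sim (\<gamma> x) (\<gamma> y) (\<gamma> x) = branch Sim x y x"
    by (rule branch_invariant[OF assms(1-5)]) simp
  moreover have "branch Sim (\<gamma> x) (\<gamma> y) (\<gamma> y) = branch Sim x y y"
    by (rule branch_invariant[OF assms(1-5)]) (simp add: dist_commute)
  moreover have "(branch Sim x y x, branch Sim x y y) \<in> L"
    using assms(6) unfolding branch_order_def by blast
  ultimately show ?thesis unfolding branch_order_def by simp
qed

end

theorem lemma9p14:
  fixes Sim :: "'a::metric_space set \<Rightarrow> 'a set \<Rightarrow> ('a \<Rightarrow> 'a) set"
  assumes "compact (UNIV :: 'a set)"
    and "ultrametric_space TYPE('a)"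
    and "finite_similarity_structure Sim"
    and "\<And>B1 B2. is_ball B1 \<Longrightarrow> is_ball B2 \<Longrightarrow> card (Sim B1 B2) \<le> 1"
  shows "\<exists>r :: ('a \<times> 'a) set. linear_order r \<and>
           (\<forall>B1 B2 \<gamma>. is_ball B1 \<and> is_ball B2 \<and> \<gamma> \<in> Sim B1 B2 \<longrightarrow>
              (\<forall>x\<in>B1. \<forall>y\<in>B1. (x, y) \<in> r \<longrightarrow> (\<gamma> x, \<gamma> y) \<in> r))"
proof -
  interpret ultrametric_unique_similarity_structure Sim
    by unfold_locales (fact assms)+
  obtain L :: "'a set rel" where "Well_order L \<and> Field L = UNIV"
    using well_ordering ..
  then have "linear_order L"
    using well_order_on_def by metis
  show ?thesis
  proof (intro exI conjI)
    show "linear_order (branch_order Sim L)"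
      using \<open>linear_order L\<close> by (rule branch_order_linear)
    show "\<forall>B1 B2 \<gamma>. is_ball B1 \<and> is_ball B2 \<and> \<gamma> \<in> Sim B1 B2 \<longrightarrow>
        (\<forall>x\<in>B1. \<forall>y\<in>B1. (x, y) \<in> branch_order Sim L \<longrightarrow> (\<gamma> x, \<gamma> y) \<in> branch_order Sim L)"
      using branch_order_preserved by (intro allI impI ballI) auto
  qed
qed

end
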